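(* Let $G$ be a group with unit $e$, $X$ a set and $(X_g,\alpha_g)_{g\in G}$ a partial action datum of $G$ on $X$. Then the datum is a lax partial action of $G$ on $X$ if and only if the assignment $g\mapsto \alpha'(g)=(X_{g^{-1}},\iota_g,\alpha_g)$ is a lax functor from $G$ (viewed as a bicategory with one $0$-cell, elements of $G$ as $1$-cells, composition given by multiplication, and only identity $2$-cells) to $\mathsf{Par}(X,X)$.
   Context: A partial action datum of $G$ on $X$ is a family of subsets $X_g\subseteq X$ ($g\in G$) together with maps $\alpha_g:X_{g^{-1}}\to X$; $\iota_g:X_{g^{-1}}\to X$ is the inclusion. It is a lax partial action if (LPA1) $X_e=X$ and $\alpha_e=\mathrm{id}_X$; (LPA2) $X_{g^{-1}}\cap\alpha_g^{-1}(X_{h^{-1}})\subseteq X_{(hg)^{-1}}$ for all $g,h$; (LPA3) $\alpha_h\circ\alpha_g=\alpha_{hg}$ on $X_{g^{-1}}\cap\alpha_g^{-1}(X_{h^{-1}})$. $\mathsf{Par}(X,X)$ is the category whose objects are spans $(A,f,a)$ from $X$ to $X$ with $f:A\to X$ injective, whose morphisms $(A,f,a)\to(B,f',b)$ are maps $t:A\to B$ with $f't=f$ and $bt=a$ (so it is a preorder), and whose horizontal composition is composition of spans by pullback: $(B,f',b)\bullet(A,f,a)$ has apex $\{x\in A: a(x)\in f'(B)\}$ with the evident legs. Since $\mathsf{Par}(X,X)$ is locally a preorder, a lax functor $F$ from $G$ to it amounts to $1$-cells $F(g)$ together with the existence of $2$-cells $(X,\mathrm{id}_X,\mathrm{id}_X)\Rightarrow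 F(e)$ and $F(h)\bullet F(g)\Rightarrow F(hg)$ for all $g,h\in G$. *)

theory Defs
  imports "HOL-Algebra.Group"
begin

text \<open>Spans (A, f, a) from X to X: apex A, left leg f, right leg a.\<close>
type_synonym ('a, 'x) span = "'a set \<times> ('a \<Rightarrow> 'x) \<times> ('a \<Rightarrow> 'x)"

definition par_cell :: "'x set \<Rightarrow> ('a, 'x) span \<Rightarrow> bool" where
  "par_cell X S = (case S of (A, f, a) \<Rightarrow>
      (\<forall>x\<in>A. f x \<in> X \<and> a x \<in> X) \<and> inj_on f A)"

definition par_2cell :: "('a, 'x) span \<Rightarrow> ('b, 'x) span \<Rightarrow> bool" where
  "par_2cell S T = (case S of (A, f, a) \<Rightarrow> case T of (B, f', b) \<Rightarrow>
      (\<exists>t :: 'a \<Rightarrow> 'b. \<forall>x\<in>A. t x \<in> B \<and> f' (t x) = f x \<and> b (t x) = a x))"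

text \<open>Horizontal composition by pullback: T \<bullet> S (first S, then T).\<close>
definition par_comp :: "('b, 'x) span \<Rightarrow> ('a, 'x) span \<Rightarrow> ('a, 'x) span" where
  "par_comp T S = (case S of (A, f, a) \<Rightarrow> case T of (B, f', b) \<Rightarrow>
      ({x \<in> A. a x \<in> f' ` B}, f, \<lambda>x. b (inv_into B f' (a x))))"

definition par_id :: "'x set \<Rightarrow> ('x, 'x) span" where
  "par_id X = (X, id, id)"

definition lax_functor_Par ::
  "('g, 'm) monoid_scheme \<Rightarrow> 'x set \<Rightarrow> ('g \<Rightarrow> ('a, 'x) span) \<Rightarrow> bool" where
  "lax_functor_Par G X F =
     ((\<forall>g\<in>carrier G. par_cell X (F g))
      \<and> par_2cell (par_id X) (F \<one>\<^bsub>G\<^esub>)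
      \<and> (\<forall>g\<in>carrier G. \<forall>h\<in>carrier G.
           par_2cell (par_comp (F h) (F g)) (F (h \<otimes>\<^bsub>G\<^esub> g))))"

definition partial_action_datum ::
  "('g, 'm) monoid_scheme \<Rightarrow> 'x set \<Rightarrow> ('g \<Rightarrow> 'x set) \<Rightarrow> ('g \<Rightarrow> 'x \<Rightarrow> 'x) \<Rightarrow> bool" where
  "partial_action_datum G X Xs \<alpha> =
     (\<forall>g\<in>carrier G. Xs g \<subseteq> X \<and> \<alpha> g ` Xs (inv\<^bsub>G\<^esub> g) \<subseteq> X)"

definition lax_partial_action ::
  "('g, 'm) monoid_scheme \<Rightarrow> 'x set \<Rightarrow> ('g \<Rightarrow> 'x set) \<Rightarrow> ('g \<Rightarrow> 'x \<Rightarrow> 'x) \<Rightarrow> bool" where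
  "lax_partial_action G X Xs \<alpha> =
     ((Xs \<one>\<^bsub>G\<^esub> = X \<and> (\<forall>x\<in>X. \<alpha> \<one>\<^bsub>G\<^esub> x = x))
      \<and> (\<forall>g\<in>carrier G. \<forall>h\<in>carrier G.
           Xs (inv\<^bsub>G\<^esub> g) \<inter> (\<alpha> g -` Xs (inv\<^bsub>G\<^esub> h)) \<subseteq> Xs (inv\<^bsub>G\<^esub> (h \<otimes>\<^bsub>G\<^esub> g)))
      \<and> (\<forall>g\<in>carrier G. \<forall>h\<in>carrier G.
           \<forall>x \<in> Xs (inv\<^bsub>G\<^esub> g) \<inter> (\<alpha> g -` Xs (inv\<^bsub>G\<^esub> h)).
             \<alpha> h (\<alpha> g x) = \<alpha> (h \<otimes>\<^bsub>G\<^esub> g) x))"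

end

theory Submission
  imports Defs
begin

text \<open>All left legs of the spans in question are inclusions, and the commuting condition then
  forces every 2-cell to be the inclusion of apexes. So the existence of the unit and composition
  2-cells of the lax functor says exactly: the apexes are contained in each other as in (LPA1) and
  (LPA2), and the right legs agree there as in (LPA1) and (LPA3).\<close>

lemma par_2cell_inclusion_spans_iff:
  "par_2cell (A, id, a) (C, id, c) \<longleftrightarrow> A \<subseteq> C \<and> (\<forall>x\<in>A. a x = c x)"
proof
  assume "par_2cell (A, id, a) (C, id, c)"
  then obtain t where "\<forall>x\<in>A. t x \<in> C \<and> t x = x \<and> c (t x) = a x"
    unfolding par_2cell_def by auto
  then show "A \<subseteq> C \<and> (\<forall>x\<in>A. a x = c x)" by auto
next
  assume "A \<subseteq> C \<and> (\<forall>x\<in>A. a x = c x)"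
  then show "par_2cell (A, id, a) (C, id, c)"
    unfolding par_2cell_def prod.case by (intro exI[of _ id]) auto
qed

lemma par_comp_inclusion_spans:
  "par_comp (B, id, b) (A, id, a) = (A \<inter> a -` B, id, \<lambda>x. b (inv_into B id (a x)))"
  unfolding par_comp_def by auto

lemma par_2cell_par_comp_inclusion_spans_iff:
  "par_2cell (par_comp (B, id, b) (A, id, a)) (C, id, c) \<longleftrightarrow>
     A \<inter> a -` B \<subseteq> C \<and> (\<forall>x\<in>A \<inter> a -` B. b (a x) = c x)"
proof -
  have "inv_into B id (a x) = a x" if "x \<in> a -` B" for x
    using that inv_into_f_f[OF inj_on_id, of "a x" B] by simp
  then show ?thesis
    unfolding par_comp_inclusion_spans par_2cell_inclusion_spans_iff by auto
qed

lemma par_2cell_par_id_inclusion_span_iff: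
  "par_2cell (par_id X) (A, id, a) \<longleftrightarrow> X \<subseteq> A \<and> (\<forall>x\<in>X. a x = x)"
  unfolding par_id_def par_2cell_inclusion_spans_iff by auto

lemma par_cell_inclusion_span_iff:
  "par_cell X (A, id, a) \<longleftrightarrow> A \<subseteq> X \<and> a ` A \<subseteq> X"
  unfolding par_cell_def by auto

theorem mainTheorem2:
  fixes G :: "('g, 'm) monoid_scheme"
    and X :: "'x set" and Xs :: "'g \<Rightarrow> 'x set" and \<alpha> :: "'g \<Rightarrow> 'x \<Rightarrow> 'x"
  assumes "group G"
    and "partial_action_datum G X Xs \<alpha>"
  shows "lax_partial_action G X Xs \<alpha> \<longleftrightarrow>
         lax_functor_Par G X (\<lambda>g. (Xs (inv\<^bsub>G\<^esub> g), id, \<alpha> g))"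
proof -
  interpret group G by fact
  have cells: "\<forall>g\<in>carrier G. par_cell X (Xs (inv\<^bsub>G\<^esub> g), id, \<alpha> g)"
    using assms(2) unfolding partial_action_datum_def par_cell_inclusion_span_iff by simp
  have "Xs \<one>\<^bsub>G\<^esub> \<subseteq> X"
    using assms(2) unfolding partial_action_datum_def by simp
  with cells show ?thesis
    unfolding lax_functor_Par_def lax_partial_action_def inv_one
      par_2cell_par_id_inclusion_span_iff par_2cell_par_comp_inclusion_spans_iff
    by blast
qed

end
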